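(* Every Čech-complete (in particular, every compact) Tychonoff $\Delta$-space is scattered. Equivalently, if $X$ is Čech-complete and $C_p(X)$ is distinguished, then $X$ is scattered.
   Context: A Tychonoff space is Čech-complete if it is a $G_\delta$-subset of some (equivalently, every) compactification of it. A space $X$ is scattered if every nonempty subset $A\subseteq X$ has a point isolated in $A$. A topological space $X$ is a $\Delta$-space if for every decreasing sequence $\{D_n:n\in\omega\}$ of subsets of $X$ with $\bigcap_n D_n=\emptyset$ there is a decreasing sequence $\{V_n:n\in\omega\}$ of open subsets of $X$ with $D_n\subseteq V_n$ for all $n$ and $\bigcap_n V_n=\emptyset$. $C_p(X)$ is the space of continuous real-valued functions on $X$ with the pointwise convergence topology; a locally convex space is distinguished if its strong dual is barrelled. *)

theory Defs
  imports "HOL-Analysis.Analysis"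
begin

definition tychonoff_space :: "'a topology \<Rightarrow> bool" where
  "tychonoff_space X \<longleftrightarrow> completely_regular_space X \<and> Hausdorff_space X"

definition compactification :: "'a topology \<Rightarrow> 'b topology \<Rightarrow> ('a \<Rightarrow> 'b) \<Rightarrow> bool" where
  "compactification X K e \<longleftrightarrow>
     compact_space K \<and> Hausdorff_space K \<and> embedding_map X K e \<and>
     K closure_of (e ` topspace X) = topspace K"

definition scattered_space :: "'a topology \<Rightarrow> bool" where
  "scattered_space X \<longleftrightarrow>
     (\<forall>A. A \<subseteq> topspace X \<and> A \<noteq> {} \<longrightarrow>
        (\<exists>x\<in>A. \<exists>U. openin X U \<and> U \<inter> A = {x}))"

definition delta_space :: "'a topology \<Rightarrow> bool" where
  "delta_space X \<longleftrightarrow>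
     (\<forall>D :: nat \<Rightarrow> 'a set.
        (\<forall>n. D n \<subseteq> topspace X) \<and> (\<forall>n. D (Suc n) \<subseteq> D n) \<and> (\<Inter>n. D n) = {} \<longrightarrow>
        (\<exists>V :: nat \<Rightarrow> 'a set. (\<forall>n. openin X (V n)) \<and> (\<forall>n. V (Suc n) \<subseteq> V n) \<and>
             (\<forall>n. D n \<subseteq> V n) \<and> (\<Inter>n. V n) = {}))"

end

theory Submission
  imports Defs
begin

text \<open>
  Suppose \<open>X\<close> is not scattered, so it contains a nonempty set \<open>A\<close> without isolated points.
  In the compactification \<open>K\<close> write \<open>e(X) = \<Inter>\<^sub>n G\<^sub>n\<close> with \<open>G\<^sub>n\<close> open. Splitting open sets that
  meet \<open>e(A)\<close> into two pieces with disjoint closures gives a Cantor scheme whose closures at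
  level \<open>n + 1\<close> lie in \<open>G\<^sub>n\<close>; by compactness every branch \<open>b\<close> of the Cantor space then yields
  a nonempty set \<open>P\<^sub>b \<subseteq> e(X)\<close>. These sets are pairwise disjoint and depend upper
  semicontinuously on \<open>b\<close>. Let \<open>D\<^sub>n\<close> be the union of the \<open>P\<^sub>b\<close> over the finitely supported \<open>b\<close>
  whose last \<open>1\<close> is at a position \<open>\<ge> n\<close>; the \<open>D\<^sub>n\<close> decrease to the empty set. Open sets
  \<open>V\<^sub>n \<supseteq> D\<^sub>n\<close> cannot have empty intersection: by upper semicontinuity each \<open>{b. P\<^sub>b \<subseteq> V\<^sub>n}\<close>
  contains a dense open subset of the Cantor space, so by the Baire property some \<open>P\<^sub>b\<close> lies in
  every \<open>V\<^sub>n\<close>.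
\<close>

lemma regular_space_closure_of_subset_openin:
  assumes "regular_space X" "openin X W" "x \<in> W"
  obtains U where "openin X U" "x \<in> U" "X closure_of U \<subseteq> W"
proof -
  obtain U V where "openin X U" "closedin X V" "x \<in> U" "U \<subseteq> V" "V \<subseteq> W"
    using assms neighbourhood_base_of_closedin[of X] unfolding neighbourhood_base_of by blast
  then show ?thesis
    using that closure_of_minimal by (metis order_trans)
qed

lemma regular_Hausdorff_separate_closures:
  assumes "regular_space X" "Hausdorff_space X" "openin X W" "x \<in> W" "y \<in> W" "x \<noteq> y"
  obtains U V where "openin X U" "openin X V" "x \<in> U" "y \<in> V"
    "X closure_of U \<subseteq> W" "X closure_of V \<subseteq> W" "disjnt (X closure_of U) (X closure_of V)"
proof -
  have "x \<in> topspace X" "y \<in> topspace X"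
    using openin_subset[OF assms(3)] assms(4,5) by auto
  then obtain P Q where PQ: "openin X P" "openin X Q" "x \<in> P" "y \<in> Q" "disjnt P Q"
    using assms(2,6) unfolding Hausdorff_space_def by blast
  have "openin X (W \<inter> P)" "x \<in> W \<inter> P" "openin X (W \<inter> Q)" "y \<in> W \<inter> Q"
    using assms(3-5) PQ(1-4) by auto
  then obtain U V where U: "openin X U" "x \<in> U" "X closure_of U \<subseteq> W \<inter> P"
    and V: "openin X V" "y \<in> V" "X closure_of V \<subseteq> W \<inter> Q"
    using regular_space_closure_of_subset_openin[OF assms(1)] by metis
  show ?thesis
  proof (rule that[OF U(1) V(1) U(2) V(2)])
    show "X closure_of U \<subseteq> W" "X closure_of V \<subseteq> W"
      using U(3) V(3) by auto
    show "disjnt (X closure_of U) (X closure_of V)"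
      using PQ(5) U(3) V(3) unfolding disjnt_def by blast
  qed
qed

lemma regular_Hausdorff_split_openin:
  assumes "regular_space X" "Hausdorff_space X" "S \<subseteq> X derived_set_of S"
    and "openin X U" "U \<inter> S \<noteq> {}"
  shows "\<exists>Q. (\<forall>t. openin X (Q t) \<and> Q t \<inter> S \<noteq> {} \<and> X closure_of (Q t) \<subseteq> U) \<and>
    disjnt (X closure_of (Q True)) (X closure_of (Q False))"
proof -
  obtain p where p: "p \<in> U" "p \<in> S"
    using assms(5) by blast
  have "p \<in> X derived_set_of S"
    using assms(3) p(2) by (rule subsetD)
  then have "\<exists>q. q \<in> U \<and> q \<in> S \<and> q \<noteq> p"
    using assms(4) p(1) unfolding in_derived_set_of by blast
  then obtain q where q: "q \<in> U" "q \<in> S" "p \<noteq> q"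
    by blast
  obtain U0 U1 where "openin X U0" "openin X U1" "p \<in> U0" "q \<in> U1"
    "X closure_of U0 \<subseteq> U" "X closure_of U1 \<subseteq> U" "disjnt (X closure_of U0) (X closure_of U1)"
    using regular_Hausdorff_separate_closures[OF assms(1,2,4) p(1) q(1,3)] by blast
  then show ?thesis
    using p(2) q(2) by (intro exI[of _ "\<lambda>t. if t then U0 else U1"]) auto
qed

lemma compact_space_decseq_closedin_subset_openin:
  assumes "compact_space X" "\<And>n. closedin X (C n)" "decseq C" "openin X U" "(\<Inter>n. C n) \<subseteq> U"
  obtains m where "C m \<subseteq> U"
proof (rule ccontr)
  assume "\<not> thesis"
  then have "C m - U \<noteq> {}" for m
    using that by blast
  moreover have "closedin X (C m - U)" for m
    using assms(2,4) by blast
  moreover have "decseq (\<lambda>m. C m - U)"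
    using assms(3) by (auto simp: decseq_def)
  ultimately have "(\<Inter>m. C m - U) \<noteq> {}"
    using assms(1) compact_space_imp_nest by metis
  then show False
    using assms(5) by blast
qed

lemma least_index_of_difference:
  fixes b c :: "nat \<Rightarrow> 'a"
  assumes "b \<noteq> c"
  obtains m where "\<forall>i<m. b i = c i" "b m \<noteq> c m"
  using assms exists_least_iff[of "\<lambda>i. b i \<noteq> c i"] by (auto simp: fun_eq_iff)

lemma notin_derived_set_of_iff:
  assumes "x \<in> topspace X"
  shows "x \<notin> X derived_set_of A \<longleftrightarrow> (\<exists>U. openin X U \<and> x \<in> U \<and> U \<inter> A \<subseteq> {x})"
  using assms unfolding in_derived_set_of by blast

lemma scattered_space_iff_derived_set_of:
  "scattered_space X \<longleftrightarrow> (\<forall>A. A \<subseteq> topspace X \<and> A \<subseteq> X derived_set_of A \<longrightarrow> A = {})"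
proof -
  have isolated: "(\<exists>x\<in>A. \<exists>U. openin X U \<and> U \<inter> A = {x}) \<longleftrightarrow> \<not> A \<subseteq> X derived_set_of A"
    if A: "A \<subseteq> topspace X" for A
  proof -
    have "(\<exists>U. openin X U \<and> U \<inter> A = {x}) \<longleftrightarrow> x \<notin> X derived_set_of A" if x: "x \<in> A" for x
    proof -
      have "x \<in> topspace X"
        using A x by (rule subsetD)
      moreover have "U \<inter> A = {x} \<longleftrightarrow> x \<in> U \<and> U \<inter> A \<subseteq> {x}" for U
        using x by blast
      ultimately show ?thesis
        by (simp add: notin_derived_set_of_iff)
    qed
    then show ?thesis
      by (auto simp: subset_iff)
  qed
  show ?thesis
    unfolding scattered_space_def
  proof (intro iffI allI impI)
    fix A
    assume "\<forall>A. A \<subseteq> topspace X \<and> A \<noteq> {} \<longrightarrow> (\<exists>x\<in>A. \<exists>U. openin X U \<and> U \<inter> A = {x})"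
      and "A \<subseteq> topspace X \<and> A \<subseteq> X derived_set_of A"
    then show "A = {}"
      using isolated[of A] by metis
  next
    fix A
    assume "\<forall>A. A \<subseteq> topspace X \<and> A \<subseteq> X derived_set_of A \<longrightarrow> A = {}"
      and "A \<subseteq> topspace X \<and> A \<noteq> {}"
    then show "\<exists>x\<in>A. \<exists>U. openin X U \<and> U \<inter> A = {x}"
      using isolated[of A] by metis
  qed
qed

lemma embedding_map_image_derived_set_of:
  assumes "embedding_map X Y f" "S \<subseteq> topspace X"
  shows "f ` (X derived_set_of S) \<subseteq> Y derived_set_of (f ` S)"
proof -
  have "f ` S \<subseteq> f ` topspace X"
    using assms(2) by blast
  then have "f ` topspace X \<inter> Y derived_set_of (f ` S) = f ` (X derived_set_of S)"
    using homeomorphic_map_derived_set_of[OF assms(1)[unfolded embedding_map_def] assms(2)]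
    by (simp add: derived_set_of_subtopology Int_absorb1)
  then show ?thesis
    by blast
qed

lemma embedding_map_openin_preimage:
  assumes "embedding_map X Y f" "openin X U"
  obtains V where "openin Y V" "U = {x \<in> topspace X. f x \<in> V}"
proof -
  have hom: "homeomorphic_map X (subtopology Y (f ` topspace X)) f"
    using assms(1) by (simp add: embedding_map_def)
  have U_sub: "U \<subseteq> topspace X"
    using assms(2) by (rule openin_subset)
  have "openin (subtopology Y (f ` topspace X)) (f ` U)"
    using homeomorphic_map_openness[OF hom U_sub] assms(2) by blast
  then obtain V where V: "openin Y V" "f ` U = V \<inter> f ` topspace X"
    unfolding openin_subtopology by blast
  have inj: "inj_on f (topspace X)"
    using hom by (rule homeomorphic_imp_injective_map)
  have "x \<in> U \<longleftrightarrow> f x \<in> V" if x: "x \<in> topspace X" for x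
  proof
    assume "x \<in> U"
    then have "f x \<in> V \<inter> f ` topspace X"
      unfolding V(2)[symmetric] by (rule imageI)
    then show "f x \<in> V"
      by (rule IntD1)
  next
    assume "f x \<in> V"
    then have "f x \<in> f ` U"
      unfolding V(2) using x by (intro IntI imageI)
    then obtain u where "u \<in> U" "f u = f x"
      by (auto simp: image_iff)
    then show "x \<in> U"
      using inj_onD[OF inj] U_sub x by (metis subsetD)
  qed
  then have "U = {x \<in> topspace X. f x \<in> V}"
    using U_sub by blast
  with V(1) show ?thesis
    by (rule that)
qed

definition cantor_scheme ::
    "'a topology \<Rightarrow> (nat \<Rightarrow> 'a set) \<Rightarrow> ((nat \<Rightarrow> bool) \<Rightarrow> nat \<Rightarrow> 'a set) \<Rightarrow> bool" where
  "cantor_scheme X G W \<longleftrightarrow>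
    (\<forall>b m. openin X (W b m) \<and> W b m \<noteq> {} \<and> X closure_of (W b (Suc m)) \<subseteq> W b m \<inter> G m) \<and>
    (\<forall>b c m. (\<forall>i<m. b i = c i) \<longrightarrow> W b m = W c m) \<and>
    (\<forall>b c m. (\<forall>i<m. b i = c i) \<and> b m \<noteq> c m \<longrightarrow>
       disjnt (X closure_of (W b (Suc m))) (X closure_of (W c (Suc m))))"

lemma regular_Hausdorff_cantor_scheme:
  assumes "regular_space X" "Hausdorff_space X" "S \<noteq> {}" "S \<subseteq> X derived_set_of S"
    and "\<And>n. openin X (G n)" "\<And>n. S \<subseteq> G n"
  shows "\<exists>W. cantor_scheme X G W"
proof -
  define good where "good U \<longleftrightarrow> openin X U \<and> U \<inter> S \<noteq> {}" for U
  have "\<forall>U n. \<exists>Q. good U \<longrightarrow> (\<forall>t. good (Q t) \<and> X closure_of (Q t) \<subseteq> U \<inter> G n)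
           \<and> disjnt (X closure_of (Q True)) (X closure_of (Q False))"
  proof (intro allI)
    fix U n
    show "\<exists>Q. good U \<longrightarrow> (\<forall>t. good (Q t) \<and> X closure_of (Q t) \<subseteq> U \<inter> G n)
           \<and> disjnt (X closure_of (Q True)) (X closure_of (Q False))"
    proof (cases "good U")
      case True
      then have "openin X (U \<inter> G n)" "U \<inter> G n \<inter> S \<noteq> {}"
        using assms(5,6) by (auto simp: good_def)
      then obtain Q where "\<forall>t. openin X (Q t) \<and> Q t \<inter> S \<noteq> {} \<and> X closure_of (Q t) \<subseteq> U \<inter> G n"
        "disjnt (X closure_of (Q True)) (X closure_of (Q False))"
        using regular_Hausdorff_split_openin[OF assms(1,2,4)] by blast
      then show ?thesis
        unfolding good_def by (intro exI[of _ Q] impI) auto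
    qed simp
  qed
  then obtain split where split: "\<And>U n t. good U \<Longrightarrow> good (split U n t)"
    "\<And>U n t. good U \<Longrightarrow> X closure_of (split U n t) \<subseteq> U \<inter> G n"
    "\<And>U n. good U \<Longrightarrow> disjnt (X closure_of (split U n True)) (X closure_of (split U n False))"
    by metis
  define W where "W b m = rec_nat (topspace X) (\<lambda>k U. split U k (b k)) m" for b m
  have W_0: "W b 0 = topspace X" and W_Suc: "W b (Suc m) = split (W b m) m (b m)" for b m
    by (simp_all add: W_def)
  have good_W: "good (W b m)" for b m
  proof (induction m)
    case 0
    have "S \<subseteq> topspace X"
      using assms(4) derived_set_of_subset_topspace by (rule order_trans)
    then show ?case
      using assms(3) by (auto simp: good_def W_0)
  qed (simp add: W_Suc split(1))
  have W_agree: "\<forall>i<m. b i = c i \<Longrightarrow> W b m = W c m" for b c m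
    by (induction m) (simp_all add: W_0 W_Suc)
  have "cantor_scheme X G W"
    unfolding cantor_scheme_def
  proof (intro conjI allI impI)
    show "openin X (W b m)" "W b m \<noteq> {}" for b m
      using good_W[of b m] by (auto simp: good_def)
    show "X closure_of (W b (Suc m)) \<subseteq> W b m \<inter> G m" for b m
      using split(2)[OF good_W] by (simp add: W_Suc)
    show "\<forall>i<m. b i = c i \<Longrightarrow> W b m = W c m" for b c m
      by (rule W_agree)
    show "disjnt (X closure_of (W b (Suc m))) (X closure_of (W c (Suc m)))"
      if "(\<forall>i<m. b i = c i) \<and> b m \<noteq> c m" for b c m
      using split(3)[OF good_W[of b m]] W_agree[of m b c] that
      by (cases "b m") (simp_all add: W_Suc disjnt_sym)
  qed
  then show ?thesis
    by blast
qed

text \<open>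
  The last clause is upper semicontinuity of \<open>P\<close> with respect to the cylinders
  \<open>{c. \<forall>i<m. c i = b i}\<close>, the basic neighbourhoods of \<open>b\<close> in the Cantor space.
\<close>
definition usc_cantor_family :: "'a topology \<Rightarrow> ((nat \<Rightarrow> bool) \<Rightarrow> 'a set) \<Rightarrow> bool" where
  "usc_cantor_family X P \<longleftrightarrow>
     (\<forall>b. P b \<noteq> {} \<and> P b \<subseteq> topspace X) \<and> (\<forall>b c. b \<noteq> c \<longrightarrow> disjnt (P b) (P c)) \<and>
     (\<forall>b U. openin X U \<and> P b \<subseteq> U \<longrightarrow> (\<exists>m. \<forall>c. (\<forall>i<m. c i = b i) \<longrightarrow> P c \<subseteq> U))"

lemma compact_cantor_scheme_usc_cantor_family:
  assumes "compact_space X" "cantor_scheme X G W"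
  shows "usc_cantor_family X (\<lambda>b. \<Inter>m. X closure_of (W b m))"
    and "(\<Inter>m. X closure_of (W b m)) \<subseteq> (\<Inter>n. G n)"
proof -
  have W_open: "openin X (W b m)" and W_ne: "W b m \<noteq> {}"
    and W_Suc: "X closure_of (W b (Suc m)) \<subseteq> W b m \<inter> G m"
    and W_agree: "\<forall>i<m. b i = c i \<Longrightarrow> W b m = W c m"
    and W_disjnt: "\<forall>i<m. b i = c i \<Longrightarrow> b m \<noteq> c m \<Longrightarrow>
       disjnt (X closure_of (W b (Suc m))) (X closure_of (W c (Suc m)))" for b c m
    using assms(2) by (simp_all add: cantor_scheme_def)
  define C where "C b m = X closure_of (W b m)" for b m
  define P where "P b = (\<Inter>m. C b m)" for b
  have C_closed: "closedin X (C b m)" for b m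
    by (simp add: C_def)
  have W_C: "W b m \<subseteq> C b m" for b m
    unfolding C_def by (rule closure_of_subset[OF openin_subset[OF W_open]])
  have C_dec: "decseq (C b)" for b
  proof (rule decseq_SucI)
    show "C b (Suc m) \<subseteq> C b m" for m
      using W_Suc[of b m] W_C[of b m] unfolding C_def by blast
  qed
  have "C b m \<noteq> {}" for b m
    using W_C W_ne by blast
  then have P_ne: "P b \<noteq> {}" for b
    unfolding P_def by (rule compact_space_imp_nest[OF assms(1) C_closed _ C_dec])
  have P_C: "P b \<subseteq> C b m" for b m
    unfolding P_def by blast
  have P_sub: "P b \<subseteq> topspace X" for b
    using P_C[of b 0] closure_of_subset_topspace unfolding C_def by (rule order_trans)
  have P_disjnt: "disjnt (P b) (P c)" if bc: "b \<noteq> c" for b c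
  proof -
    obtain m where "\<forall>i<m. b i = c i" "b m \<noteq> c m"
      using least_index_of_difference[OF bc] by blast
    then have "disjnt (C b (Suc m)) (C c (Suc m))"
      unfolding C_def by (rule W_disjnt)
    then show ?thesis
      using P_C[of b "Suc m"] P_C[of c "Suc m"] unfolding disjnt_def by blast
  qed
  have P_usc: "\<exists>m. \<forall>c. (\<forall>i<m. c i = b i) \<longrightarrow> P c \<subseteq> U"
    if U: "openin X U" and PU: "P b \<subseteq> U" for b U
  proof -
    obtain m where "C b m \<subseteq> U"
      using compact_space_decseq_closedin_subset_openin[where C = "C b",
          OF assms(1) C_closed C_dec U PU[unfolded P_def]]
      by blast
    moreover have "P c \<subseteq> C b m" if "\<forall>i<m. c i = b i" for c
      using P_C[of c m] unfolding C_def W_agree[OF that] .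
    ultimately show ?thesis
      by blast
  qed
  have "usc_cantor_family X P"
    unfolding usc_cantor_family_def
    by (intro conjI allI impI) (simp_all add: P_ne P_sub P_disjnt P_usc)
  moreover have "P = (\<lambda>b. \<Inter>m. X closure_of (W b m))"
    by (simp add: fun_eq_iff P_def C_def)
  ultimately show "usc_cantor_family X (\<lambda>b. \<Inter>m. X closure_of (W b m))"
    by simp
  show "(\<Inter>m. X closure_of (W b m)) \<subseteq> (\<Inter>n. G n)"
    using P_C[of b] W_Suc[of b] unfolding P_def C_def by blast
qed

lemma compact_Hausdorff_usc_cantor_family:
  fixes G :: "nat \<Rightarrow> 'a set"
  assumes "compact_space X" "Hausdorff_space X" "S \<noteq> {}" "S \<subseteq> X derived_set_of S"
    and "\<And>n. openin X (G n)" "\<And>n. S \<subseteq> G n"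
  obtains P where "usc_cantor_family X P" "\<And>b. P b \<subseteq> (\<Inter>n. G n)"
proof -
  have "regular_space X"
    using assms(1,2) by (rule compact_Hausdorff_imp_regular_space)
  then obtain W where W: "cantor_scheme X G W"
    using regular_Hausdorff_cantor_scheme[where G = G, OF _ assms(2-6)] by blast
  show ?thesis
    using compact_cantor_scheme_usc_cantor_family[OF assms(1) W] by (rule that)
qed

lemma usc_cantor_family_embedding_map:
  assumes "embedding_map X Y f" "usc_cantor_family Y P" "\<And>b. P b \<subseteq> f ` topspace X"
  shows "usc_cantor_family X (\<lambda>b. {x \<in> topspace X. f x \<in> P b})"
proof -
  have P_ne: "P b \<noteq> {}" and P_disjnt: "b \<noteq> c \<Longrightarrow> disjnt (P b) (P c)"
    and P_usc: "openin Y V \<Longrightarrow> P b \<subseteq> V \<Longrightarrow> \<exists>m. \<forall>c. (\<forall>i<m. c i = b i) \<longrightarrow> P c \<subseteq> V"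
    for b c V
    using assms(2) by (simp_all add: usc_cantor_family_def)
  define Q where "Q = (\<lambda>b. {x \<in> topspace X. f x \<in> P b})"
  have Q_ne: "Q b \<noteq> {}" for b
  proof -
    obtain y where "y \<in> P b"
      using P_ne by blast
    moreover obtain x where "x \<in> topspace X" "y = f x"
      using assms(3) calculation by blast
    ultimately show ?thesis
      unfolding Q_def by blast
  qed
  have Q_disjnt: "disjnt (Q b) (Q c)" if "b \<noteq> c" for b c
    using P_disjnt[OF that] unfolding Q_def disjnt_iff by blast
  have Q_usc: "\<exists>m. \<forall>c. (\<forall>i<m. c i = b i) \<longrightarrow> Q c \<subseteq> U"
    if U: "openin X U" and QU: "Q b \<subseteq> U" for b U
  proof -
    obtain V where V: "openin Y V" "U = {x \<in> topspace X. f x \<in> V}"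
      using embedding_map_openin_preimage[OF assms(1) U] by blast
    have "P b \<subseteq> V"
    proof
      fix y
      assume "y \<in> P b"
      moreover obtain x where "x \<in> topspace X" "y = f x"
        using assms(3) calculation by blast
      ultimately show "y \<in> V"
        using QU unfolding Q_def V(2) by blast
    qed
    then obtain m where "\<forall>c. (\<forall>i<m. c i = b i) \<longrightarrow> P c \<subseteq> V"
      using P_usc[OF V(1)] by blast
    then have "\<forall>c. (\<forall>i<m. c i = b i) \<longrightarrow> Q c \<subseteq> U"
      unfolding Q_def V(2) by blast
    then show ?thesis
      by blast
  qed
  have Q_sub: "Q b \<subseteq> topspace X" for b
    unfolding Q_def by blast
  have "usc_cantor_family X Q"
    unfolding usc_cantor_family_def
    by (intro conjI allI impI) (simp_all add: Q_ne Q_sub Q_disjnt Q_usc)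
  then show ?thesis
    by (simp add: Q_def)
qed

text \<open>
  The cylinders \<open>{c. \<forall>i<m'. c i = b' i}\<close> form a base of the Cantor space, so the hypothesis
  says that every \<open>S n\<close> contains a dense open set.
\<close>
lemma cantor_space_Baire:
  fixes S :: "nat \<Rightarrow> (nat \<Rightarrow> bool) set"
  assumes "\<And>n m b. \<exists>m' b'. m < m' \<and> (\<forall>i<m. b' i = b i) \<and>
    (\<forall>c. (\<forall>i<m'. c i = b' i) \<longrightarrow> c \<in> S n)"
  shows "(\<Inter>n. S n) \<noteq> {}"
proof -
  define ext where "ext n p q \<longleftrightarrow> fst p < fst q \<and> (\<forall>i<fst p. snd q i = snd p i) \<and>
    (\<forall>c. (\<forall>i<fst q. c i = snd q i) \<longrightarrow> c \<in> S n)" for n and p q :: "nat \<times> (nat \<Rightarrow> bool)"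
  have ext_SOME: "ext n p (SOME q. ext n p q)" for n p
  proof -
    obtain m' b' where "fst p < m'" "\<forall>i<fst p. b' i = snd p i"
      "\<forall>c. (\<forall>i<m'. c i = b' i) \<longrightarrow> c \<in> S n"
      using assms[of "fst p" "snd p" n] by (elim exE conjE)
    then have "ext n p (m', b')"
      unfolding ext_def by simp
    then show ?thesis
      by (rule someI)
  qed
  define seq where "seq k = rec_nat (0, \<lambda>_. False) (\<lambda>n p. SOME q. ext n p q) k" for k
  define m where "m k = fst (seq k)" for k
  define b where "b k = snd (seq k)" for k
  have ext_seq: "ext k (seq k) (seq (Suc k))" for k
    using ext_SOME by (simp add: seq_def)
  have "strict_mono m"
    using ext_seq by (simp add: strict_mono_Suc_iff m_def ext_def)
  then have m_ge: "k \<le> m k" and m_mono: "j \<le> k \<Longrightarrow> m j \<le> m k" for j k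
    by (simp_all add: strict_mono_imp_increasing strict_mono_less_eq)
  have b_agree: "\<forall>i<m j. b k i = b j i" if "j \<le> k" for j k
    using that
  proof (induction k rule: dec_induct)
    case (step k)
    have "\<forall>i<m k. b (Suc k) i = b k i"
      using ext_seq[of k] by (simp add: ext_def m_def b_def)
    with step.IH m_mono[OF step.hyps(1)] show ?case
      by simp
  qed simp
  define c where "c i = b (Suc i) i" for i
  have "\<forall>i<m (Suc k). c i = b (Suc k) i" for k
  proof (intro allI impI)
    fix i
    assume "i < m (Suc k)"
    moreover have "i < m (Suc i)"
      using m_ge[of "Suc i"] by simp
    ultimately show "c i = b (Suc k) i"
      unfolding c_def using b_agree[of "Suc i" "Suc k"] b_agree[of "Suc k" "Suc i"]
      by (cases "i \<le> k") auto
  qed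
  then have "c \<in> S k" for k
    using ext_seq[of k] by (simp add: ext_def m_def b_def)
  then show ?thesis
    by blast
qed

definition last_one_from :: "nat \<Rightarrow> (nat \<Rightarrow> bool) set" where
  "last_one_from n = {b. \<exists>j\<ge>n. b j \<and> (\<forall>i>j. \<not> b i)}"

lemma usc_cantor_family_common_branch:
  assumes "usc_cantor_family X P" "\<And>n. openin X (V n)"
    and "\<And>n b. b \<in> last_one_from n \<Longrightarrow> P b \<subseteq> V n"
  obtains c where "\<And>n. P c \<subseteq> V n"
proof -
  have P_usc: "openin X U \<Longrightarrow> P b \<subseteq> U \<Longrightarrow> \<exists>m. \<forall>c. (\<forall>i<m. c i = b i) \<longrightarrow> P c \<subseteq> U" for b U
    using assms(1) by (simp add: usc_cantor_family_def)
  have "(\<Inter>n. {c. P c \<subseteq> V n}) \<noteq> {}"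
  proof (rule cantor_space_Baire)
    fix n m :: nat and b :: "nat \<Rightarrow> bool"
    define b' where "b' i = (if i < m then b i else i = max m n)" for i
    have "b' \<in> last_one_from n"
      unfolding last_one_from_def b'_def by (intro CollectI exI[of _ "max m n"]) auto
    then have "P b' \<subseteq> V n"
      by (rule assms(3))
    then obtain m0 where m0: "\<And>c. \<forall>i<m0. c i = b' i \<Longrightarrow> P c \<subseteq> V n"
      using P_usc[OF assms(2)] by blast
    have "c \<in> {c. P c \<subseteq> V n}" if "\<forall>i<max m0 (Suc m). c i = b' i" for c
      using m0 that by simp
    moreover have "\<forall>i<m. b' i = b i"
      by (simp add: b'_def)
    ultimately show "\<exists>m' b'. m < m' \<and> (\<forall>i<m. b' i = b i) \<and>
        (\<forall>c. (\<forall>i<m'. c i = b' i) \<longrightarrow> c \<in> {c. P c \<subseteq> V n})"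
      by (intro exI[of _ "max m0 (Suc m)"] exI[of _ b']) auto
  qed
  then obtain c where "P c \<subseteq> V n" for n
    by blast
  then show ?thesis
    by (rule that)
qed

lemma delta_space_not_usc_cantor_family:
  assumes "delta_space X"
  shows "\<not> usc_cantor_family X P"
proof
  assume P: "usc_cantor_family X P"
  have P_sub: "P b \<subseteq> topspace X" and P_ne: "P b \<noteq> {}" for b
    using P by (auto simp: usc_cantor_family_def)
  have P_disjnt: "b \<noteq> c \<Longrightarrow> disjnt (P b) (P c)" for b c
    using P by (simp add: usc_cantor_family_def)
  define D :: "nat \<Rightarrow> 'a set" where "D n = (\<Union>b\<in>last_one_from n. P b)" for n :: nat
  have "(\<Inter>n. D n) = {}"
  proof (rule ccontr)
    assume "(\<Inter>n. D n) \<noteq> {}"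
    then obtain x where x: "\<And>n. x \<in> D n"
      by blast
    obtain b j where b: "\<forall>i>j. \<not> b i" "x \<in> P b"
      using x[of 0] unfolding D_def last_one_from_def by blast
    obtain b' j' where b': "Suc j \<le> j'" "b' j'" "x \<in> P b'"
      using x[of "Suc j"] unfolding D_def last_one_from_def by blast
    have "b \<noteq> b'"
      using b(1) b'(1,2) by (auto simp: Suc_le_eq)
    then show False
      using P_disjnt b(2) b'(3) by (auto simp: disjnt_iff)
  qed
  moreover have "\<forall>n. D n \<subseteq> topspace X"
    using P_sub by (auto simp: D_def)
  moreover have "\<forall>n. D (Suc n) \<subseteq> D n"
  proof
    fix n
    have "last_one_from (Suc n) \<subseteq> last_one_from n"
      unfolding last_one_from_def using Suc_leD by blast
    then show "D (Suc n) \<subseteq> D n"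
      unfolding D_def by blast
  qed
  ultimately obtain V where V_open: "\<And>n. openin X (V n)" and D_V: "\<And>n. D n \<subseteq> V n"
    and V_Inter: "(\<Inter>n. V n) = {}"
    using spec[OF assms[unfolded delta_space_def], of D] by blast
  have "P b \<subseteq> V n" if "b \<in> last_one_from n" for n b
    using D_V[of n] that unfolding D_def by blast
  then obtain c where "P c \<subseteq> V n" for n
    using usc_cantor_family_common_branch[where V = V, OF P V_open] by blast
  then show False
    using P_ne[of c] V_Inter by blast
qed

theorem theorem3p4:
  fixes X :: "'a topology" and K :: "'b topology" and e :: "'a \<Rightarrow> 'b"
  assumes "tychonoff_space X"
    and "compactification X K e"
    and "gdelta_in K (e ` topspace X)"
    and "delta_space X"
  shows "scattered_space X"
proof (rule ccontr)
  assume "\<not> scattered_space X"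
  then obtain A where A: "A \<subseteq> topspace X" "A \<subseteq> X derived_set_of A" "A \<noteq> {}"
    unfolding scattered_space_iff_derived_set_of by metis
  have K: "compact_space K" "Hausdorff_space K" and e: "embedding_map X K e"
    using assms(2) by (auto simp: compactification_def)
  obtain G :: "nat \<Rightarrow> 'b set" where G_open: "\<And>n. openin K (G n)"
    and G_Inter: "(\<Inter>n. G n) = e ` topspace X"
    using assms(3) unfolding gdelta_in_descending by metis
  have "e ` A \<noteq> {}"
    using A(3) by simp
  moreover have "e ` A \<subseteq> K derived_set_of (e ` A)"
    using image_mono[OF A(2)] embedding_map_image_derived_set_of[OF e A(1)] by (rule order_trans)
  moreover have "e ` A \<subseteq> G n" for n
  proof -
    have "e ` A \<subseteq> (\<Inter>n. G n)"
      unfolding G_Inter using A(1) by (rule image_mono)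
    then show ?thesis
      by auto
  qed
  ultimately obtain P where "usc_cantor_family K P" "\<And>b. P b \<subseteq> (\<Inter>n. G n)"
    using compact_Hausdorff_usc_cantor_family[where S = "e ` A" and G = G, OF K _ _ G_open]
    by metis
  then have "usc_cantor_family X (\<lambda>b. {x \<in> topspace X. e x \<in> P b})"
    unfolding G_Inter by (rule usc_cantor_family_embedding_map[OF e])
  with delta_space_not_usc_cantor_family[OF assms(4)] show False
    by blast
qed

end
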